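(* Let $I=\langle N,M,V\rangle$ be an ordered instance of chores, let $i\in N$, and let $k$ be the maximum number of bundles of cardinality one in any MMS partition of $i$. Then $i$ has an MMS partition in which each of the chores $1,2,\dots,\min(n-1,k)$ forms a bundle of cardinality one.
   Context: An instance of chores $I=\langle N,M,V\rangle$ has agents $N=\{1,\dots,n\}$, chores $M=\{1,\dots,m\}$ and additive valuations $v_i$ with $v_i(\emptyset)=0$, $v_i(S)=\sum_{g\in S}v_i(\{g\})$ and $v_{ij}:=v_i(\{j\})\le 0$. It is ordered if $v_{ij}\le v_{i(j+1)}$ for all $i$ and $1\le j<m$. An allocation ($n$-partition) is an ordered $n$-tuple of pairwise disjoint, possibly empty subsets of $M$ with union $M$. The maximin share of $i$ is $\mu_i=\max_A\min_j v_i(A_j)$ over all allocations; an MMS partition of $i$ is an allocation $A$ with $v_i(A_j)\ge\mu_i$ for all $j$. *)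

theory Defs
  imports Complex_Main
begin

definition val :: "(nat \<Rightarrow> nat \<Rightarrow> real) \<Rightarrow> nat \<Rightarrow> nat set \<Rightarrow> real" where
  "val v i S = (\<Sum>g\<in>S. v i g)"

definition is_alloc :: "nat \<Rightarrow> nat \<Rightarrow> (nat \<Rightarrow> nat set) \<Rightarrow> bool" where
  "is_alloc n m A \<longleftrightarrow>
     (\<forall>j\<in>{1..n}. \<forall>j'\<in>{1..n}. j \<noteq> j' \<longrightarrow> A j \<inter> A j' = {}) \<and>
     (\<Union>j\<in>{1..n}. A j) = {1..m}"

definition mms :: "nat \<Rightarrow> nat \<Rightarrow> (nat \<Rightarrow> nat \<Rightarrow> real) \<Rightarrow> nat \<Rightarrow> real" where
  "mms n m v i = Max {Min ((\<lambda>j. val v i (A j)) ` {1..n}) | A. is_alloc n m A}"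

definition mms_partition :: "nat \<Rightarrow> nat \<Rightarrow> (nat \<Rightarrow> nat \<Rightarrow> real) \<Rightarrow> nat \<Rightarrow> (nat \<Rightarrow> nat set) \<Rightarrow> bool" where
  "mms_partition n m v i A \<longleftrightarrow> is_alloc n m A \<and> (\<forall>j\<in>{1..n}. val v i (A j) \<ge> mms n m v i)"

definition num_singletons :: "nat \<Rightarrow> (nat \<Rightarrow> nat set) \<Rightarrow> nat" where
  "num_singletons n A = card {j\<in>{1..n}. card (A j) = 1}"

definition chores_instance :: "nat \<Rightarrow> nat \<Rightarrow> (nat \<Rightarrow> nat \<Rightarrow> real) \<Rightarrow> bool" where
  "chores_instance n m v \<longleftrightarrow> n \<ge> 1 \<and> (\<forall>i\<in>{1..n}. \<forall>j\<in>{1..m}. v i j \<le> 0)"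

definition ordered_instance :: "nat \<Rightarrow> nat \<Rightarrow> (nat \<Rightarrow> nat \<Rightarrow> real) \<Rightarrow> bool" where
  "ordered_instance n m v \<longleftrightarrow> (\<forall>i\<in>{1..n}. \<forall>j. 1 \<le> j \<and> j < m \<longrightarrow> v i j \<le> v i (j+1))"

end

theory Submission
  imports Defs
begin

text \<open>Exchange argument. Suppose chore \<open>d\<close> is not a singleton bundle of an MMS partition
  while some chore \<open>c > d\<close> is. Swap them: the new singleton \<open>{d}\<close> is worth at least the
  bundle that used to contain \<open>d\<close> (all chores are nonpositive), and that bundle only gains,
  since \<open>v i d \<le> v i c\<close> in an ordered instance. The set of singleton chores loses \<open>c\<close> and
  gains \<open>d\<close>, so starting from a partition with \<open>k\<close> singletons and repeating this for
  \<open>d = 1, 2, \<dots>\<close> moves the singletons onto the chores \<open>1, \<dots>, k\<close>.\<close>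

lemma ordered_instance_mono:
  assumes "ordered_instance n m v" "i \<in> {1..n}" "1 \<le> a" "a \<le> b" "b \<le> m"
  shows "v i a \<le> v i b"
proof -
  have "\<And>j. j \<in> {1..<m} \<Longrightarrow> v i j \<le> v i (Suc j)"
    using assms(1,2) unfolding ordered_instance_def by auto
  from lift_Suc_mono_le_ivl[where f = "v i" and N = "{1..<m}", OF this] show ?thesis
    using assms(3-5) by auto
qed

lemma val_le_member:
  assumes "finite B" "d \<in> B" "\<And>g. g \<in> B \<Longrightarrow> v i g \<le> 0"
  shows "val v i B \<le> v i d"
proof -
  have "val v i B = v i d + val v i (B - {d})"
    using assms(1,2) unfolding val_def by (simp add: sum.remove)
  moreover have "val v i (B - {d}) \<le> 0"
    using assms(3) unfolding val_def by (intro sum_nonpos) auto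
  ultimately show ?thesis by simp
qed

lemma val_swap:
  assumes "finite B" "d \<in> B" "c \<notin> B"
  shows "val v i (insert c (B - {d})) = val v i B - v i d + v i c"
  using assms unfolding val_def by (simp add: sum.remove)

lemma is_alloc_bundle_subset: "is_alloc n m A \<Longrightarrow> j \<in> {1..n} \<Longrightarrow> A j \<subseteq> {1..m}"
  unfolding is_alloc_def by blast

lemma is_alloc_swap:
  assumes "is_alloc n m A" "jc \<in> {1..n}" "jd \<in> {1..n}" "jc \<noteq> jd" "c \<in> A jc" "d \<in> A jd"
  shows "is_alloc n m (A(jc := insert d (A jc - {c}), jd := insert c (A jd - {d})))"
proof -
  let ?B = "A(jc := insert d (A jc - {c}), jd := insert c (A jd - {d}))"
  have disj: "\<And>j j'. j \<in> {1..n} \<Longrightarrow> j' \<in> {1..n} \<Longrightarrow> j \<noteq> j' \<Longrightarrow> A j \<inter> A j' = {}"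
    and cover: "(\<Union>j\<in>{1..n}. A j) = {1..m}"
    using assms(1) unfolding is_alloc_def by auto
  have c_only: "c \<notin> A j" if "j \<in> {1..n}" "j \<noteq> jc" for j
    using disj[OF that(1) assms(2)] that(2) assms(5) by blast
  have d_only: "d \<notin> A j" if "j \<in> {1..n}" "j \<noteq> jd" for j
    using disj[OF that(1) assms(3)] that(2) assms(6) by blast
  have B_disj: "?B j \<inter> ?B j' = {}" if "j \<in> {1..n}" "j' \<in> {1..n}" "j \<noteq> j'" for j j'
    using disj[OF that] c_only d_only that assms(2-6) by auto
  have "(\<Union>j\<in>{1..n}. ?B j) = (\<Union>j\<in>{1..n}. A j)"
  proof (intro equalityI subsetI)
    fix x assume "x \<in> (\<Union>j\<in>{1..n}. ?B j)"
    then obtain j where "j \<in> {1..n}" "x \<in> ?B j" by blast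
    then have "x \<in> A j \<or> x \<in> A jc \<or> x \<in> A jd"
      using assms(5,6) by (auto split: if_splits)
    then show "x \<in> (\<Union>j\<in>{1..n}. A j)" using \<open>j \<in> {1..n}\<close> assms(2,3) by blast
  next
    fix x assume "x \<in> (\<Union>j\<in>{1..n}. A j)"
    then obtain j where "j \<in> {1..n}" "x \<in> A j" by blast
    then have "x \<in> ?B j \<or> x \<in> ?B jc \<or> x \<in> ?B jd"
      using assms(4) by auto
    then show "x \<in> (\<Union>j\<in>{1..n}. ?B j)" using \<open>j \<in> {1..n}\<close> assms(2,3) by blast
  qed
  then show ?thesis unfolding is_alloc_def using B_disj cover by simp
qed

lemma mms_partition_exists:
  assumes "n \<ge> 1"
  shows "\<exists>A. mms_partition n m v i A"
proof -
  let ?S = "{Min ((\<lambda>j. val v i (A j)) ` {1..n}) | A. is_alloc n m A}"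
  have "?S \<subseteq> val v i ` Pow {1..m}"
  proof
    fix x assume "x \<in> ?S"
    then obtain A where A: "is_alloc n m A" "x = Min ((\<lambda>j. val v i (A j)) ` {1..n})" by blast
    have "x \<in> (\<lambda>j. val v i (A j)) ` {1..n}" unfolding A(2) using assms by (intro Min_in) auto
    then show "x \<in> val v i ` Pow {1..m}" using is_alloc_bundle_subset[OF A(1)] by blast
  qed
  then have "finite ?S" by (rule finite_subset) simp
  moreover have "is_alloc n m (\<lambda>j. if j = 1 then {1..m} else {})"
    unfolding is_alloc_def using assms by auto
  then have "?S \<noteq> {}" by blast
  ultimately have "mms n m v i \<in> ?S" unfolding mms_def by (rule Max_in)
  then show ?thesis unfolding mms_partition_def by auto
qed

lemma num_singletons_le: "num_singletons n A \<le> n"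
proof -
  have "{j\<in>{1..n}. card (A j) = 1} \<subseteq> {1..n}" by blast
  then have "num_singletons n A \<le> card {1..n}"
    unfolding num_singletons_def by (rule card_mono[OF finite_atLeastAtMost])
  then show ?thesis by simp
qed

definition singleton_chores :: "nat \<Rightarrow> (nat \<Rightarrow> nat set) \<Rightarrow> nat set" where
  "singleton_chores n A = {c. \<exists>j\<in>{1..n}. A j = {c}}"

lemma singleton_chores_subset:
  assumes "is_alloc n m A"
  shows "singleton_chores n A \<subseteq> {1..m}"
proof
  fix c assume "c \<in> singleton_chores n A"
  then obtain j where "j \<in> {1..n}" "A j = {c}" unfolding singleton_chores_def by blast
  then show "c \<in> {1..m}" using is_alloc_bundle_subset[OF assms] by blast
qed

lemma finite_singleton_chores:
  assumes "is_alloc n m A"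
  shows "finite (singleton_chores n A)"
  using singleton_chores_subset[OF assms] by (rule finite_subset) simp

lemma card_singleton_chores:
  assumes "is_alloc n m A"
  shows "card (singleton_chores n A) = num_singletons n A"
proof -
  let ?J = "{j\<in>{1..n}. card (A j) = 1}"
  have "singleton_chores n A = (\<lambda>j. the_elem (A j)) ` ?J"
  proof (intro equalityI subsetI)
    fix c assume "c \<in> singleton_chores n A"
    then obtain j where "j \<in> {1..n}" "A j = {c}" unfolding singleton_chores_def by blast
    then show "c \<in> (\<lambda>j. the_elem (A j)) ` ?J" by (intro image_eqI[of _ _ j]) auto
  next
    fix c assume "c \<in> (\<lambda>j. the_elem (A j)) ` ?J"
    then obtain j x where "j \<in> {1..n}" "A j = {x}" "c = the_elem (A j)"
      by (auto simp: card_1_singleton_iff)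
    then show "c \<in> singleton_chores n A" unfolding singleton_chores_def by auto
  qed
  moreover have "inj_on (\<lambda>j. the_elem (A j)) ?J"
  proof (rule inj_onI)
    fix j j' assume "j \<in> ?J" "j' \<in> ?J" "the_elem (A j) = the_elem (A j')"
    then obtain x where "j \<in> {1..n}" "j' \<in> {1..n}" "A j = {x}" "A j' = {x}"
      by (auto simp: card_1_singleton_iff)
    then show "j = j'" using assms unfolding is_alloc_def by blast
  qed
  ultimately show ?thesis unfolding num_singletons_def by (simp add: card_image)
qed

lemma singleton_chores_swap:
  assumes "jc \<in> {1..n}" "jc \<noteq> jd" "A jc = {c}" "d \<in> A jd" "d \<notin> singleton_chores n A"
  shows "insert d (singleton_chores n A - {c})
           \<subseteq> singleton_chores n (A(jc := {d}, jd := insert c (A jd - {d})))"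
    (is "_ \<subseteq> singleton_chores n ?A'")
proof
  fix e assume e: "e \<in> insert d (singleton_chores n A - {c})"
  show "e \<in> singleton_chores n ?A'"
  proof (cases "e = d")
    case True
    have "?A' jc = {e}" using True assms(2) by simp
    then show ?thesis using assms(1) unfolding singleton_chores_def by blast
  next
    case False
    then obtain j where j: "j \<in> {1..n}" "A j = {e}" "e \<noteq> c"
      using e unfolding singleton_chores_def by auto
    have "j \<noteq> jd" using j assms(4,5) unfolding singleton_chores_def by auto
    moreover have "j \<noteq> jc" using j assms(3) by auto
    ultimately have "?A' j = {e}" using j(2) by simp
    then show ?thesis using j(1) unfolding singleton_chores_def by blast
  qed
qed

lemma mms_partition_exchange:
  assumes ch: "chores_instance n m v" and ord: "ordered_instance n m v" and i: "i \<in> {1..n}"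
    and P: "mms_partition n m v i A"
    and c: "c \<in> singleton_chores n A"
    and d: "d \<in> {1..m}" "d \<notin> singleton_chores n A" "d < c"
  shows "\<exists>A'. mms_partition n m v i A' \<and>
           insert d (singleton_chores n A - {c}) \<subseteq> singleton_chores n A'"
proof -
  have al: "is_alloc n m A" using P unfolding mms_partition_def by simp
  obtain jc where jc: "jc \<in> {1..n}" "A jc = {c}" using c unfolding singleton_chores_def by blast
  obtain jd where jd: "jd \<in> {1..n}" "d \<in> A jd" using d(1) al unfolding is_alloc_def by blast
  have "jc \<noteq> jd" using jc jd d(3) by auto
  have "c \<notin> A jd" using al jc jd \<open>jc \<noteq> jd\<close> unfolding is_alloc_def by blast
  have Ajd: "A jd \<subseteq> {1..m}" "finite (A jd)"
    using is_alloc_bundle_subset[OF al jd(1)] finite_subset by auto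
  define A' where "A' = A(jc := {d}, jd := insert c (A jd - {d}))"
  have "mms n m v i \<le> val v i (A jd)"
    using P jd(1) unfolding mms_partition_def by blast
  moreover have "val v i (A jd) \<le> val v i {d}"
  proof -
    have "\<And>g. g \<in> A jd \<Longrightarrow> v i g \<le> 0"
      using ch i Ajd(1) unfolding chores_instance_def by auto
    then show ?thesis using val_le_member[OF Ajd(2) jd(2)] by (simp add: val_def)
  qed
  moreover have "val v i (A jd) \<le> val v i (insert c (A jd - {d}))"
  proof -
    have "c \<in> {1..m}" using c singleton_chores_subset[OF al] by blast
    then have "v i d \<le> v i c" using ordered_instance_mono[OF ord i, of d c] d(1,3) by simp
    then show ?thesis using val_swap[OF Ajd(2) jd(2) \<open>c \<notin> A jd\<close>] by simp
  qed
  ultimately have "mms n m v i \<le> val v i (A' j)" if "j \<in> {1..n}" for j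
    using P that unfolding mms_partition_def A'_def by auto
  moreover have "is_alloc n m A'"
    using is_alloc_swap[OF al jc(1) jd(1) \<open>jc \<noteq> jd\<close> _ jd(2), of c] jc(2)
    unfolding A'_def by simp
  ultimately have "mms_partition n m v i A'" unfolding mms_partition_def by blast
  moreover have "insert d (singleton_chores n A - {c}) \<subseteq> singleton_chores n A'"
    unfolding A'_def using singleton_chores_swap[OF jc(1) \<open>jc \<noteq> jd\<close> jc(2) jd(2) d(2)] .
  ultimately show ?thesis by blast
qed

lemma mms_partition_prefix_singletons:
  assumes ch: "chores_instance n m v" and ord: "ordered_instance n m v" and i: "i \<in> {1..n}"
    and P: "mms_partition n m v i A"
    and t: "t \<le> card (singleton_chores n A)"
  shows "\<exists>A'. mms_partition n m v i A' \<and> card (singleton_chores n A) \<le> card (singleton_chores n A')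
           \<and> {1..t} \<subseteq> singleton_chores n A'"
  using t
proof (induction t)
  case 0
  then show ?case using P by auto
next
  case (Suc t)
  then obtain A' where A': "mms_partition n m v i A'"
    "card (singleton_chores n A) \<le> card (singleton_chores n A')" "{1..t} \<subseteq> singleton_chores n A'"
    by auto
  let ?S = "singleton_chores n A'"
  have S_sub: "?S \<subseteq> {1..m}" and fin: "finite ?S"
    using A'(1) singleton_chores_subset finite_singleton_chores unfolding mms_partition_def by auto
  show ?case
  proof (cases "Suc t \<in> ?S")
    case True
    then have "{1..Suc t} \<subseteq> ?S" using A'(3) by (auto simp: le_Suc_eq)
    then show ?thesis using A'(1,2) by blast
  next
    case False
    have "\<not> ?S \<subseteq> {1..t}"
    proof
      assume "?S \<subseteq> {1..t}"
      then have "card ?S \<le> t" using card_mono[of "{1..t}" ?S] by simp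
      then show False using A'(2) Suc.prems by simp
    qed
    then obtain c where c: "c \<in> ?S" "c \<notin> {1..t}" by blast
    have "c \<noteq> Suc t" using c(1) False by blast
    then have lt: "Suc t < c" using c S_sub by auto
    then have "Suc t \<in> {1..m}" using c(1) S_sub by auto
    then obtain A'' where A'': "mms_partition n m v i A''"
      "insert (Suc t) (?S - {c}) \<subseteq> singleton_chores n A''"
      using mms_partition_exchange[OF ch ord i A'(1) c(1) _ False lt] by blast
    have "finite (singleton_chores n A'')"
      using A''(1) finite_singleton_chores unfolding mms_partition_def by blast
    have "card ?S = card (insert (Suc t) (?S - {c}))"
      using card.remove[OF fin c(1)] fin False by simp
    also have "\<dots> \<le> card (singleton_chores n A'')"
      using \<open>finite (singleton_chores n A'')\<close> A''(2) by (rule card_mono)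
    finally have "card (singleton_chores n A) \<le> card (singleton_chores n A'')"
      using A'(2) by linarith
    moreover have "{1..Suc t} \<subseteq> insert (Suc t) (?S - {c})"
      using A'(3) c(2) by (auto simp: le_Suc_eq)
    ultimately show ?thesis using A'' by blast
  qed
qed

theorem lemma18:
  fixes n m :: nat and v :: "nat \<Rightarrow> nat \<Rightarrow> real" and i k :: nat
  assumes "chores_instance n m v"
    and "ordered_instance n m v"
    and "i \<in> {1..n}"
    and "k = Max {num_singletons n A | A. mms_partition n m v i A}"
  shows "\<exists>A. mms_partition n m v i A \<and>
           (\<forall>c\<in>{1..min (n-1) k}. \<exists>j\<in>{1..n}. A j = {c})"
proof -
  let ?K = "{num_singletons n A | A. mms_partition n m v i A}"
  have "?K \<subseteq> {..n}" using num_singletons_le by auto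
  then have fin: "finite ?K" by (rule finite_subset) simp
  obtain A' where "mms_partition n m v i A'"
    using mms_partition_exists[of n m v i] assms(1) unfolding chores_instance_def by auto
  then have "?K \<noteq> {}" by blast
  with fin have "k \<in> ?K" unfolding assms(4) by (rule Max_in)
  then obtain A0 where A0: "mms_partition n m v i A0" "num_singletons n A0 = k" by blast
  then have "card (singleton_chores n A0) = k"
    using card_singleton_chores[of n m A0] unfolding mms_partition_def by simp
  then obtain A where "mms_partition n m v i A" "{1..min (n-1) k} \<subseteq> singleton_chores n A"
    using mms_partition_prefix_singletons[OF assms(1-3) A0(1), of "min (n-1) k"] by auto
  then show ?thesis unfolding singleton_chores_def by blast
qed

end
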